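(* For every set $P$ of $n$ points in the plane, the unit disk graph $\mathrm{UDG}(P)$ has a spanning subgraph $H$ with at most $9n$ edges such that for every edge $(p,q)$ of $\mathrm{UDG}(P)$, the hop distance between $p$ and $q$ in $H$ is at most $5$.
   Context: For a finite point set $P$ in the plane, the unit disk graph $\mathrm{UDG}(P)$ is the graph with vertex set $P$ having an edge between $p,q\in P$ if and only if the Euclidean distance $|pq|\le 1$. The hop distance between two vertices of a graph $H$ is the minimum number of edges on a path between them in $H$. *)

theory Defs
  imports "HOL-Analysis.Analysis" "HOL-Library.Extended_Nat"
begin

type_synonym point = "real ^ 2"

definition udg_edges :: "point set \<Rightarrow> point set set" where
  "udg_edges P = {{p, q} | p q. p \<in> P \<and> q \<in> P \<and> p \<noteq> q \<and> dist p q \<le> 1}"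

definition is_walk :: "'a set set \<Rightarrow> 'a list \<Rightarrow> bool" where
  "is_walk E xs \<longleftrightarrow> xs \<noteq> [] \<and> (\<forall>i < length xs - 1. {xs ! i, xs ! Suc i} \<in> E)"

definition hop_dist :: "'a set set \<Rightarrow> 'a \<Rightarrow> 'a \<Rightarrow> enat" where
  "hop_dist E p q = (INF xs \<in> {xs. is_walk E xs \<and> hd xs = p \<and> last xs = q}.
                        enat (length xs - 1))"

end

theory Submission
  imports Defs
begin

(* Cut the plane into half-open square cells of side 1/sqrt 2, so that two points of the
   same cell are at distance less than 1.  H joins every point to a fixed leader of its
   cell and, for every pair of cells containing points at distance at most 1, contains one
   such pair of points (a bridge).  An edge pq of UDG(P) is then served by the path
   p, leader, bridge end, bridge end, leader, q of at most 5 hops.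
   Two such cells differ by one of 20 offsets; charging every bridge to the cell from which
   its offset lies in a fixed half of them, each cell pays for at most 10 bridges, and for
   at most 9 if it holds a single point p, because p cannot be within distance 1 of both
   cells at offsets (1,2) and (1,-2).  A cell with k points thus contributes at most
   k - 1 + 10 <= 9k edges if k >= 2, and at most 9 if k = 1. *)

lemma is_walk_Cons:
  "ys \<noteq> [] \<Longrightarrow> is_walk E (x # ys) \<longleftrightarrow> {x, hd ys} \<in> E \<and> is_walk E ys"
  unfolding is_walk_def
  by (cases ys) (auto simp: nth_Cons less_Suc_eq_0_disj split: nat.splits)

lemma is_walk_append:
  assumes "is_walk E xs" "is_walk E ys" "last xs = hd ys"
  shows "is_walk E (xs @ tl ys)"
  using assms
proof (induction xs)
  case Nil
  then show ?case by (simp add: is_walk_def)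
next
  case (Cons x xs)
  show ?case
  proof (cases "xs = []")
    case True
    then show ?thesis using Cons.prems by (cases ys) auto
  next
    case False
    then show ?thesis using Cons by (auto simp: is_walk_Cons)
  qed
qed

lemma hop_dist_le_walk_length:
  "is_walk E xs \<Longrightarrow> hop_dist E (hd xs) (last xs) \<le> enat (length xs - 1)"
  unfolding hop_dist_def by (rule INF_lower) auto

lemma hop_dist_attained:
  assumes "hop_dist E p q \<noteq> \<infinity>"
  obtains xs where "is_walk E xs" "hd xs = p" "last xs = q" "hop_dist E p q = enat (length xs - 1)"
proof -
  let ?W = "{xs. is_walk E xs \<and> hd xs = p \<and> last xs = q}"
  let ?L = "(\<lambda>xs. enat (length xs - 1)) ` ?W"
  have "?W \<noteq> {}" using assms unfolding hop_dist_def by (metis INF_empty top_enat_def)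
  then have "?L \<noteq> {}" by blast
  then have "Inf ?L \<in> ?L" unfolding Inf_enat_def by (auto intro: LeastI)
  then show ?thesis using that unfolding hop_dist_def by auto
qed

lemma hop_dist_triangle: "hop_dist E p r \<le> hop_dist E p q + hop_dist E q r"
proof (cases "hop_dist E p q = \<infinity> \<or> hop_dist E q r = \<infinity>")
  case False
  then obtain xs ys where
    xs: "is_walk E xs" "hd xs = p" "last xs = q" "hop_dist E p q = enat (length xs - 1)" and
    ys: "is_walk E ys" "hd ys = q" "last ys = r" "hop_dist E q r = enat (length ys - 1)"
    by (metis hop_dist_attained)
  have ne: "xs \<noteq> []" "ys \<noteq> []" using xs(1) ys(1) by (auto simp: is_walk_def)
  have "last (xs @ tl ys) = r" using xs(3) ys(2,3) ne by (cases ys) auto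
  then have "hop_dist E p r \<le> enat (length (xs @ tl ys) - 1)"
    using hop_dist_le_walk_length[OF is_walk_append[OF xs(1) ys(1)]] xs ys ne by simp
  also have "\<dots> = hop_dist E p q + hop_dist E q r"
    using xs(4) ys(4) ne by (cases xs) simp_all
  finally show ?thesis .
qed auto

lemma hop_dist_le_1:
  assumes "p = q \<or> {p, q} \<in> E"
  shows "hop_dist E p q \<le> 1"
proof (cases "p = q")
  case True
  then show ?thesis
    using hop_dist_le_walk_length[of E "[p]"] by (simp add: is_walk_def flip: zero_enat_def)
next
  case False
  then show ?thesis
    using assms hop_dist_le_walk_length[of E "[p, q]"] by (simp add: is_walk_def one_enat_def)
qed

lemma hop_dist_le_if_successively:
  assumes "successively (\<lambda>x y. x = y \<or> {x, y} \<in> E) xs" "xs \<noteq> []"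
  shows "hop_dist E (hd xs) (last xs) \<le> enat (length xs - 1)"
  using assms
proof (induction xs)
  case (Cons x xs)
  show ?case
  proof (cases "xs = []")
    case True
    then show ?thesis
      using hop_dist_le_walk_length[of E "[x]"] by (simp add: is_walk_def)
  next
    case False
    have "hop_dist E x (last xs) \<le> hop_dist E x (hd xs) + hop_dist E (hd xs) (last xs)"
      by (rule hop_dist_triangle)
    also have "\<dots> \<le> 1 + enat (length xs - 1)"
      using Cons False by (intro add_mono hop_dist_le_1) (auto simp: successively_Cons)
    finally show ?thesis
      using False by (simp add: one_enat_def)
  qed
qed simp

definition cell :: "point \<Rightarrow> int \<times> int" where
  "cell p = (\<lfloor>sqrt 2 * p$1\<rfloor>, \<lfloor>sqrt 2 * p$2\<rfloor>)"

lemma abs_floor_diff_less_1: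
  fixes x y :: real
  shows "\<bar>real_of_int (\<lfloor>y\<rfloor> - \<lfloor>x\<rfloor>) - (y - x)\<bar> < 1"
  using floor_correct[of x] floor_correct[of y] by linarith

lemma scaled_coord_diff_sq_sum:
  fixes p q :: point
  shows "(sqrt 2 * q$1 - sqrt 2 * p$1)\<^sup>2 + (sqrt 2 * q$2 - sqrt 2 * p$2)\<^sup>2 = 2 * (dist p q)\<^sup>2"
proof -
  have "(sqrt 2 * x - sqrt 2 * y)\<^sup>2 = 2 * (x - y)\<^sup>2" for x y :: real
    by (simp add: power_mult_distrib flip: right_diff_distrib)
  moreover have "(dist p q)\<^sup>2 = (q$1 - p$1)\<^sup>2 + (q$2 - p$2)\<^sup>2"
    by (simp add: dist_vec_def L2_set_def sum_2 dist_real_def power2_commute)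
  ultimately show ?thesis by simp
qed

lemma abs_scaled_coord_diff_less:
  fixes p q :: point
  assumes "dist p q \<le> 1"
  shows "\<bar>sqrt 2 * q$i - sqrt 2 * p$i\<bar> < 3/2"
proof -
  have "\<bar>q$i - p$i\<bar> \<le> 1"
    using dist_vec_nth_le[of q i p] assms by (simp add: dist_real_def dist_commute)
  then have "sqrt 2 * \<bar>q$i - p$i\<bar> \<le> sqrt 2"
    by (simp add: mult_left_le)
  also have "sqrt 2 < 3/2"
    by (rule real_less_lsqrt) (simp_all add: power2_eq_square)
  finally have "sqrt 2 * \<bar>q$i - p$i\<bar> < 3/2" .
  then show ?thesis by (simp add: abs_mult flip: right_diff_distrib)
qed

lemma dist_less_1_if_same_cell:
  fixes p q :: point
  assumes "cell p = cell q"
  shows "dist p q < 1"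
proof -
  have "\<bar>sqrt 2 * q$i - sqrt 2 * p$i\<bar> < 1" if "\<lfloor>sqrt 2 * p$i\<rfloor> = \<lfloor>sqrt 2 * q$i\<rfloor>" for i
    using that abs_floor_diff_less_1[of "sqrt 2 * p$i" "sqrt 2 * q$i"] by simp
  from this[of 1] this[of 2] assms
  have "(sqrt 2 * q$1 - sqrt 2 * p$1)\<^sup>2 < 1" "(sqrt 2 * q$2 - sqrt 2 * p$2)\<^sup>2 < 1"
    by (simp_all add: cell_def abs_square_less_1)
  then have "(sqrt 2 * q$1 - sqrt 2 * p$1)\<^sup>2 + (sqrt 2 * q$2 - sqrt 2 * p$2)\<^sup>2 < 2"
    by linarith
  then show ?thesis
    unfolding scaled_coord_diff_sq_sum by (simp add: power_less_one_iff abs_square_less_1)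
qed

(* One offset from each pair \<plusminus>d of the 20 possible differences d = (a, b) between the cells
   of two points at distance at most 1: |a|, |b| \<le> 2, d \<noteq> 0 and not |a| = |b| = 2. *)
definition forward_offsets :: "(int \<times> int) set" where
  "forward_offsets = {(0,1), (0,2), (1,-2), (1,-1), (1,0), (1,1), (1,2), (2,-1), (2,0), (2,1)}"

lemma finite_forward_offsets: "finite forward_offsets"
  by (simp add: forward_offsets_def)

lemma card_forward_offsets: "card forward_offsets = 10"
  by (simp add: forward_offsets_def)

lemma cell_diff_in_forward_offsets:
  fixes p q :: point
  assumes "dist p q \<le> 1" "cell p \<noteq> cell q"
  shows "cell q - cell p \<in> forward_offsets \<or> cell p - cell q \<in> forward_offsets"
proof -
  define dx where "dx = sqrt 2 * q$1 - sqrt 2 * p$1"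
  define dy where "dy = sqrt 2 * q$2 - sqrt 2 * p$2"
  define a where "a = \<lfloor>sqrt 2 * q$1\<rfloor> - \<lfloor>sqrt 2 * p$1\<rfloor>"
  define b where "b = \<lfloor>sqrt 2 * q$2\<rfloor> - \<lfloor>sqrt 2 * p$2\<rfloor>"
  have diff: "cell q - cell p = (a, b)" "cell p - cell q = (-a, -b)"
    by (simp_all add: cell_def a_def b_def)
  have a: "\<bar>real_of_int a - dx\<bar> < 1" and b: "\<bar>real_of_int b - dy\<bar> < 1"
    unfolding a_def b_def dx_def dy_def by (rule abs_floor_diff_less_1)+
  have "\<bar>dx\<bar> < 3/2" "\<bar>dy\<bar> < 3/2"
    unfolding dx_def dy_def using abs_scaled_coord_diff_less[OF assms(1)] by auto
  with a b have small: "\<bar>a\<bar> \<le> 2" "\<bar>b\<bar> \<le> 2"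
    by linarith+
  have corner: "\<not> (\<bar>a\<bar> = 2 \<and> \<bar>b\<bar> = 2)"
  proof
    assume "\<bar>a\<bar> = 2 \<and> \<bar>b\<bar> = 2"
    with a b have "1 < \<bar>dx\<bar>" "1 < \<bar>dy\<bar>"
      by linarith+
    then have "1 < dx\<^sup>2" "1 < dy\<^sup>2"
      using one_less_power[of "\<bar>dx\<bar>" 2] one_less_power[of "\<bar>dy\<bar>" 2] by simp_all
    moreover have "dx\<^sup>2 + dy\<^sup>2 \<le> 2"
      using scaled_coord_diff_sq_sum[where p = p and q = q] assms(1) unfolding dx_def dy_def
      by (simp add: power_le_one)
    ultimately show False
      by linarith
  qed
  have nonzero: "(a, b) \<noteq> (0, 0)"
    using assms(2) diff(1) by (metis eq_iff_diff_eq_0 zero_prod_def)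
  have "a = -2 \<or> a = -1 \<or> a = 0 \<or> a = 1 \<or> a = 2" "b = -2 \<or> b = -1 \<or> b = 0 \<or> b = 1 \<or> b = 2"
    using small by linarith+
  then have "(a, b) \<in> forward_offsets \<or> (-a, -b) \<in> forward_offsets"
    using corner nonzero unfolding forward_offsets_def by (elim disjE) simp_all
  then show ?thesis
    unfolding diff .
qed

lemma not_neighbours_two_rows_above_and_below:
  fixes p q r :: point
  assumes "dist p q \<le> 1" "dist p r \<le> 1"
  shows "\<not> (snd (cell q) = snd (cell p) + 2 \<and> snd (cell r) = snd (cell p) - 2)"
proof
  let ?y = "\<lambda>x :: point. sqrt 2 * x$2"
  assume "snd (cell q) = snd (cell p) + 2 \<and> snd (cell r) = snd (cell p) - 2"
  then have "?y q - ?y r > 3"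
    using floor_correct[of "?y p"] floor_correct[of "?y q"] floor_correct[of "?y r"]
    by (simp add: cell_def)
  moreover have "\<bar>?y q - ?y p\<bar> < 3/2" "\<bar>?y r - ?y p\<bar> < 3/2"
    using abs_scaled_coord_diff_less assms by blast+
  ultimately show False
    by linarith
qed

locale udg_cells =
  fixes P :: "point set"
  assumes finite_P: "finite P"
begin

definition cell_points :: "int \<times> int \<Rightarrow> point set" where
  "cell_points c = {p \<in> P. cell p = c}"

definition leader :: "int \<times> int \<Rightarrow> point" where
  "leader c = (SOME p. p \<in> cell_points c)"

definition star_edges :: "int \<times> int \<Rightarrow> point set set" where
  "star_edges c = (\<lambda>p. {p, leader c}) ` (cell_points c - {leader c})"

definition cells_adjacent :: "int \<times> int \<Rightarrow> int \<times> int \<Rightarrow> bool" where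
  "cells_adjacent c d \<longleftrightarrow> (\<exists>p \<in> cell_points c. \<exists>q \<in> cell_points d. dist p q \<le> 1)"

definition bridge :: "int \<times> int \<Rightarrow> int \<times> int \<Rightarrow> point set" where
  "bridge c d = (SOME e. \<exists>p \<in> cell_points c. \<exists>q \<in> cell_points d. dist p q \<le> 1 \<and> e = {p, q})"

definition forward_neighbours :: "int \<times> int \<Rightarrow> (int \<times> int) set" where
  "forward_neighbours c = {d. d - c \<in> forward_offsets \<and> cells_adjacent c d}"

definition spanner :: "point set set" where
  "spanner = (\<Union>c \<in> cell ` P. star_edges c \<union> bridge c ` forward_neighbours c)"

lemma finite_cell_points: "finite (cell_points c)"
  using finite_P by (simp add: cell_points_def)

lemma leader_in_cell_points: "c \<in> cell ` P \<Longrightarrow> leader c \<in> cell_points c"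
  unfolding leader_def cell_points_def by (rule someI_ex) blast

lemma bridgeE:
  assumes "cells_adjacent c d"
  obtains p q where "p \<in> cell_points c" "q \<in> cell_points d" "dist p q \<le> 1" "bridge c d = {p, q}"
proof -
  have "\<exists>e. \<exists>p \<in> cell_points c. \<exists>q \<in> cell_points d. dist p q \<le> 1 \<and> e = {p, q}"
    using assms unfolding cells_adjacent_def by blast
  then have "\<exists>p \<in> cell_points c. \<exists>q \<in> cell_points d. dist p q \<le> 1 \<and> bridge c d = {p, q}"
    unfolding bridge_def by (rule someI_ex)
  then show ?thesis
    using that by blast
qed

lemma spanner_subset_udg_edges: "spanner \<subseteq> udg_edges P"
proof
  fix e
  assume "e \<in> spanner"
  then consider (star) c where "c \<in> cell ` P" "e \<in> star_edges c"
    | (bridge) c d where "d \<in> forward_neighbours c" "e = bridge c d"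
    unfolding spanner_def by blast
  then show "e \<in> udg_edges P"
  proof cases
    case star
    then obtain p where p: "p \<in> cell_points c" "p \<noteq> leader c" "e = {p, leader c}"
      unfolding star_edges_def by blast
    have leader: "leader c \<in> cell_points c"
      using leader_in_cell_points[OF star(1)] .
    then have "dist p (leader c) \<le> 1"
      using dist_less_1_if_same_cell[of p "leader c"] p(1) by (simp add: cell_points_def)
    with p leader show ?thesis
      by (auto simp: udg_edges_def cell_points_def)
  next
    case bridge
    then have "d - c \<in> forward_offsets" "cells_adjacent c d"
      by (simp_all add: forward_neighbours_def)
    moreover have "(0 :: int \<times> int) \<notin> forward_offsets"
      by (simp add: forward_offsets_def zero_prod_def)
    ultimately have "c \<noteq> d"
      by auto
    obtain p q where "p \<in> cell_points c" "q \<in> cell_points d" "dist p q \<le> 1" "e = {p, q}"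
      using bridgeE[OF \<open>cells_adjacent c d\<close>] bridge(2) by metis
    with \<open>c \<noteq> d\<close> show ?thesis
      by (auto simp: udg_edges_def cell_points_def)
  qed
qed

lemma leader_edge:
  assumes "p \<in> P"
  shows "p = leader (cell p) \<or> {p, leader (cell p)} \<in> spanner"
proof -
  have "p \<noteq> leader (cell p) \<Longrightarrow> {p, leader (cell p)} \<in> star_edges (cell p)"
    using assms by (auto simp: star_edges_def cell_points_def)
  then show ?thesis
    using assms unfolding spanner_def by blast
qed

lemma bridge_edge:
  assumes "p \<in> P" "q \<in> P" "dist p q \<le> 1" "cell p \<noteq> cell q"
  shows "\<exists>u \<in> cell_points (cell p). \<exists>v \<in> cell_points (cell q). {u, v} \<in> spanner"
proof -
  have forward: "\<exists>u \<in> cell_points (cell p). \<exists>v \<in> cell_points (cell q). {u, v} \<in> spanner"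
    if "p \<in> P" "q \<in> P" "dist p q \<le> 1" "cell q - cell p \<in> forward_offsets" for p q
  proof -
    have "cells_adjacent (cell p) (cell q)"
      using that by (auto simp: cells_adjacent_def cell_points_def)
    then have "cell q \<in> forward_neighbours (cell p)"
      using that(4) by (simp add: forward_neighbours_def)
    then have "bridge (cell p) (cell q) \<in> spanner"
      using that(1) unfolding spanner_def by blast
    then show ?thesis
      using bridgeE[OF \<open>cells_adjacent (cell p) (cell q)\<close>] by metis
  qed
  from cell_diff_in_forward_offsets[OF assms(3,4)] show ?thesis
  proof
    assume "cell p - cell q \<in> forward_offsets"
    then show ?thesis
      using forward[of q p] assms by (metis dist_commute insert_commute)
  qed (use forward assms in blast)
qed

lemma hop_dist_spanner_le_5:
  assumes "p \<in> P" "q \<in> P" "dist p q \<le> 1"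
  shows "hop_dist spanner p q \<le> 5"
proof -
  let ?step = "\<lambda>x y. x = y \<or> {x, y} \<in> spanner"
  have to_leader: "?step x (leader (cell x))" and from_leader: "?step (leader (cell x)) x"
    if "x \<in> P" for x
    using leader_edge[OF that] by (auto simp: insert_commute)
  obtain path where "successively ?step path" "path \<noteq> []" "hd path = p" "last path = q"
    "length path \<le> 6"
  proof (cases "cell p = cell q")
    case True
    show ?thesis
      by (rule that[of "[p, leader (cell p), q]"]) (use to_leader[of p] from_leader[of q] assms True in auto)
  next
    case False
    then obtain u v where u: "u \<in> P" "cell u = cell p" and v: "v \<in> P" "cell v = cell q"
      and uv: "{u, v} \<in> spanner"
      using bridge_edge[OF assms] by (auto simp: cell_points_def)
    show ?thesis
      by (rule that[of "[p, leader (cell p), u, v, leader (cell q), q]"])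
        (use to_leader[of p] from_leader[of u] uv to_leader[of v] from_leader[of q] assms u v in auto)
  qed
  then have "hop_dist spanner p q \<le> enat (length path - 1)"
    using hop_dist_le_if_successively[of spanner path] by auto
  also have "\<dots> \<le> 5"
    using \<open>length path \<le> 6\<close> by (simp add: numeral_eq_enat)
  finally show ?thesis .
qed

lemma card_star_edges_le: "c \<in> cell ` P \<Longrightarrow> card (star_edges c) \<le> card (cell_points c) - 1"
  unfolding star_edges_def
  using card_image_le[of "cell_points c - {leader c}"] finite_cell_points leader_in_cell_points
  by simp

lemma forward_neighbours_eq:
  "forward_neighbours c = (\<lambda>d. c + d) ` {d \<in> forward_offsets. cells_adjacent c (c + d)}"
  unfolding forward_neighbours_def by force

lemma finite_forward_neighbours: "finite (forward_neighbours c)"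
  unfolding forward_neighbours_eq using finite_forward_offsets by simp

lemma card_forward_neighbours_le:
  assumes "{d \<in> forward_offsets. cells_adjacent c (c + d)} \<subseteq> D" "finite D"
  shows "card (forward_neighbours c) \<le> card D"
  unfolding forward_neighbours_eq
  using card_image_le card_mono assms finite_subset le_trans by meson

lemma card_forward_neighbours_le_10: "card (forward_neighbours c) \<le> 10"
  using card_forward_neighbours_le[of c forward_offsets] card_forward_offsets finite_forward_offsets
  by auto

lemma card_forward_neighbours_le_9:
  assumes "cell_points c = {p}"
  shows "card (forward_neighbours c) \<le> 9"
proof -
  have "\<not> (cells_adjacent c (c + (1, 2)) \<and> cells_adjacent c (c + (1, -2)))"
  proof
    assume "cells_adjacent c (c + (1, 2)) \<and> cells_adjacent c (c + (1, -2))"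
    then obtain q r where "q \<in> cell_points (c + (1, 2))" "dist p q \<le> 1"
      "r \<in> cell_points (c + (1, -2))" "dist p r \<le> 1"
      using assms unfolding cells_adjacent_def by auto
    moreover have "cell p = c"
      using assms by (auto simp: cell_points_def)
    ultimately show False
      using not_neighbours_two_rows_above_and_below[of p q r] by (auto simp: cell_points_def)
  qed
  then obtain x where "x \<in> forward_offsets" "\<not> cells_adjacent c (c + x)"
    unfolding forward_offsets_def by blast
  then have "{d \<in> forward_offsets. cells_adjacent c (c + d)} \<subseteq> forward_offsets - {x}"
    by auto
  moreover have "card (forward_offsets - {x}) = 9"
    using \<open>x \<in> forward_offsets\<close> card_forward_offsets finite_forward_offsets by simp
  ultimately show ?thesis
    using card_forward_neighbours_le[of c "forward_offsets - {x}"] finite_forward_offsets by simp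
qed

lemma card_cell_edges_le:
  assumes "c \<in> cell ` P"
  shows "card (star_edges c \<union> bridge c ` forward_neighbours c) \<le> 9 * card (cell_points c)"
proof -
  have "card (star_edges c \<union> bridge c ` forward_neighbours c)
      \<le> card (star_edges c) + card (forward_neighbours c)"
    using card_Un_le card_image_le[OF finite_forward_neighbours] by (meson add_left_mono order_trans)
  moreover have "card (cell_points c) \<noteq> 0"
    using leader_in_cell_points[OF assms] finite_cell_points by auto
  moreover have "card (forward_neighbours c) \<le> 9" if "card (cell_points c) = 1"
    using that card_forward_neighbours_le_9 by (metis card_1_singletonE)
  ultimately show ?thesis
    using card_star_edges_le[OF assms] card_forward_neighbours_le_10[of c] by linarith
qed

lemma card_eq_sum_card_cell_points: "card P = (\<Sum>c \<in> cell ` P. card (cell_points c))"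
proof -
  have "P = (\<Union>c \<in> cell ` P. cell_points c)"
    by (auto simp: cell_points_def)
  also have "card \<dots> = (\<Sum>c \<in> cell ` P. card (cell_points c))"
    using finite_P finite_cell_points by (intro card_UN_disjoint) (auto simp: cell_points_def)
  finally show ?thesis .
qed

lemma card_spanner_le: "card spanner \<le> 9 * card P"
proof -
  have "card spanner \<le> (\<Sum>c \<in> cell ` P. card (star_edges c \<union> bridge c ` forward_neighbours c))"
    unfolding spanner_def using finite_P by (intro card_UN_le) simp
  also have "\<dots> \<le> (\<Sum>c \<in> cell ` P. 9 * card (cell_points c))"
    by (intro sum_mono card_cell_edges_le)
  also have "\<dots> = 9 * card P"
    by (simp add: card_eq_sum_card_cell_points sum_distrib_left)
  finally show ?thesis .
qed

end

theorem theorem3: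
  fixes P :: "point set" and n :: nat
  assumes "finite P" and "card P = n"
  shows "\<exists>H. H \<subseteq> udg_edges P \<and> card H \<le> 9 * n \<and>
             (\<forall>p q. {p, q} \<in> udg_edges P \<longrightarrow> hop_dist H p q \<le> 5)"
proof -
  interpret udg_cells P
    using assms(1) by unfold_locales
  have "hop_dist spanner p q \<le> 5" if "{p, q} \<in> udg_edges P" for p q
  proof -
    have "\<exists>a b. {p, q} = {a, b} \<and> a \<in> P \<and> b \<in> P \<and> a \<noteq> b \<and> dist a b \<le> 1"
      using that by (simp add: udg_edges_def)
    then obtain a b where "{p, q} = {a, b}" "a \<in> P" "b \<in> P" "dist a b \<le> 1"
      by blast
    moreover from this have "hop_dist spanner a b \<le> 5" "hop_dist spanner b a \<le> 5"
      using hop_dist_spanner_le_5 by (simp_all add: dist_commute)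
    ultimately show ?thesis
      by (auto simp: doubleton_eq_iff)
  qed
  then show ?thesis
    using spanner_subset_udg_edges card_spanner_le assms(2) by (intro exI[of _ spanner]) simp
qed

end
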